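(* Let $(\Phi,D)$ be a domain-free information algebra whose lattice $D$ has a top element. (1) $(\Phi,D)$ is continuous (resp. compact) if and only if $(\Phi,\le)$ is a continuous lattice (resp. an algebraic lattice). (2) $(\Phi,D)$ is s-continuous if and only if $(\Phi,\le)$ is a complete lattice and for all $\phi\in\Phi$ and $x\in D$, $\phi^{\Rightarrow x}=\vee\{\psi\in\Phi:\psi=\psi^{\Rightarrow x}\ll\phi\}$; and $(\Phi,D)$ is s-compact if and only if $(\Phi,\le)$ is a complete lattice and for all $\phi\in\Phi$ and $x\in D$, $\phi^{\Rightarrow x}=\vee\{\psi\in\Phi_f:\psi=\psi^{\Rightarrow x}\le\phi\}$.
   Context: A domain-free information algebra $(\Phi,D)$ consists of a set $\Phi$, a lattice $D$, a combination $\otimes:\Phi\times\Phi\to\Phi$ and a focusing $\Phi\times D\to\Phi$, $(\psi,x)\mapsto\psi^{\Rightarrow x}$, such that: (1) $\otimes$ is associative and commutative and has a neutral element $e$; (2) $(\psi^{\Rightarrow y})^{\Rightarrow x}=\psi^{\Rightarrow x\wedge y}$; (3) $(\phi^{\Rightarrow x}\otimes\psi)^{\Rightarrow x}=\phi^{\Rightarrow x}\otimes\psi^{\Rightarrow x}$; (4) for every $\psi$ there is $x\in D$ with $\psi^{\Rightarrow x}=\psi$; (5) $\psi\otimes\psi^{\Rightarrow x}=\psi$. $\Phi$ is ordered by $\psi\le\phi$ iff $\psi\otimes\phi=\phi$; suprema are with respect to this order. $a\ll b$ means: for every directed $X$ with $b\le\vee X$ there is $c\in X$ with $a\le c$; $\Phi_f=\{\phi\in\Phi:\phi\ll\phi\}$.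 A complete lattice $L$ is continuous if $a=\vee\{b:b\ll a\}$ for all $a$, and algebraic if $a=\vee\{b:b\ll b\le a\}$ for all $a$. $(\Phi,D)$ is called continuous (resp. s-continuous) if there is $\Gamma\subseteq\Phi$, closed under combination and containing $e$, such that (convergency) every directed $X\subseteq\Gamma$ has a supremum in $\Phi$, and (density) $\phi=\vee\{\psi\in\Gamma:\psi\ll\phi\}$ for all $\phi$ (resp. (strong density) $\phi^{\Rightarrow x}=\vee\{\psi\in\Gamma:\psi=\psi^{\Rightarrow x}\ll\phi\}$ for all $\phi,x$). It is called compact (resp. s-compact) if such a $\Gamma$ additionally satisfies (compactness): for every directed $X\subseteq\Gamma$ and $\phi\in\Gamma$ with $\phi\le\vee X$ there is $\psi\in X$ with $\phi\le\psi$. *)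

theory Defs
  imports Main
begin

text \<open>The carrier \<Phi> is the whole type 'a, D is the lattice type 'd,
  comb is the combination, e the neutral element, foc the focusing
  (foc \<psi> x stands for \<psi> focused on x).\<close>

definition info_algebra ::
  "('a \<Rightarrow> 'a \<Rightarrow> 'a) \<Rightarrow> 'a \<Rightarrow> ('a \<Rightarrow> 'd::lattice \<Rightarrow> 'a) \<Rightarrow> bool" where
  "info_algebra comb e foc \<longleftrightarrow>
     (\<forall>a b c. comb (comb a b) c = comb a (comb b c)) \<and>
     (\<forall>a b. comb a b = comb b a) \<and>
     (\<forall>a. comb a e = a) \<and>
     (\<forall>\<psi> x y. foc (foc \<psi> y) x = foc \<psi> (inf x y)) \<and>
     (\<forall>\<phi> \<psi> x. foc (comb (foc \<phi> x) \<psi>) x = comb (foc \<phi> x) (foc \<psi> x)) \<and>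
     (\<forall>\<psi>. \<exists>x. foc \<psi> x = \<psi>) \<and>
     (\<forall>\<psi> x. comb \<psi> (foc \<psi> x) = \<psi>)"

definition ia_le :: "('a \<Rightarrow> 'a \<Rightarrow> 'a) \<Rightarrow> 'a \<Rightarrow> 'a \<Rightarrow> bool" where
  "ia_le comb \<psi> \<phi> \<longleftrightarrow> comb \<psi> \<phi> = \<phi>"

definition partial_ord :: "('a \<Rightarrow> 'a \<Rightarrow> bool) \<Rightarrow> bool" where
  "partial_ord le \<longleftrightarrow> (\<forall>a. le a a) \<and> (\<forall>a b. le a b \<and> le b a \<longrightarrow> a = b)
     \<and> (\<forall>a b c. le a b \<and> le b c \<longrightarrow> le a c)"

definition is_lub :: "('a \<Rightarrow> 'a \<Rightarrow> bool) \<Rightarrow> 'a set \<Rightarrow> 'a \<Rightarrow> bool" where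
  "is_lub le X s \<longleftrightarrow> (\<forall>x\<in>X. le x s) \<and> (\<forall>u. (\<forall>x\<in>X. le x u) \<longrightarrow> le s u)"

definition has_lub :: "('a \<Rightarrow> 'a \<Rightarrow> bool) \<Rightarrow> 'a set \<Rightarrow> bool" where
  "has_lub le X \<longleftrightarrow> (\<exists>s. is_lub le X s)"

definition directed :: "('a \<Rightarrow> 'a \<Rightarrow> bool) \<Rightarrow> 'a set \<Rightarrow> bool" where
  "directed le X \<longleftrightarrow> X \<noteq> {} \<and> (\<forall>a\<in>X. \<forall>b\<in>X. \<exists>c\<in>X. le a c \<and> le b c)"

definition way_below :: "('a \<Rightarrow> 'a \<Rightarrow> bool) \<Rightarrow> 'a \<Rightarrow> 'a \<Rightarrow> bool" where
  "way_below le a b \<longleftrightarrow>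
     (\<forall>X s. directed le X \<and> is_lub le X s \<and> le b s \<longrightarrow> (\<exists>c\<in>X. le a c))"

definition complete_lat :: "('a \<Rightarrow> 'a \<Rightarrow> bool) \<Rightarrow> bool" where
  "complete_lat le \<longleftrightarrow> partial_ord le \<and> (\<forall>X. has_lub le X)"

definition continuous_lat :: "('a \<Rightarrow> 'a \<Rightarrow> bool) \<Rightarrow> bool" where
  "continuous_lat le \<longleftrightarrow> complete_lat le \<and> (\<forall>a. is_lub le {b. way_below le b a} a)"

definition algebraic_lat :: "('a \<Rightarrow> 'a \<Rightarrow> bool) \<Rightarrow> bool" where
  "algebraic_lat le \<longleftrightarrow> complete_lat le \<and>
     (\<forall>a. is_lub le {b. way_below le b b \<and> le b a} a)"

definition admissible_gen :: "('a \<Rightarrow> 'a \<Rightarrow> 'a) \<Rightarrow> 'a \<Rightarrow> 'a set \<Rightarrow> bool" where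
  "admissible_gen comb e \<Gamma> \<longleftrightarrow> e \<in> \<Gamma> \<and> (\<forall>a\<in>\<Gamma>. \<forall>b\<in>\<Gamma>. comb a b \<in> \<Gamma>)"

definition convergency :: "('a \<Rightarrow> 'a \<Rightarrow> 'a) \<Rightarrow> 'a set \<Rightarrow> bool" where
  "convergency comb \<Gamma> \<longleftrightarrow>
     (\<forall>X. X \<subseteq> \<Gamma> \<and> directed (ia_le comb) X \<longrightarrow> has_lub (ia_le comb) X)"

definition density :: "('a \<Rightarrow> 'a \<Rightarrow> 'a) \<Rightarrow> 'a set \<Rightarrow> bool" where
  "density comb \<Gamma> \<longleftrightarrow>
     (\<forall>\<phi>. is_lub (ia_le comb) {\<psi>\<in>\<Gamma>. way_below (ia_le comb) \<psi> \<phi>} \<phi>)"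

definition strong_density ::
  "('a \<Rightarrow> 'a \<Rightarrow> 'a) \<Rightarrow> ('a \<Rightarrow> 'd \<Rightarrow> 'a) \<Rightarrow> 'a set \<Rightarrow> bool" where
  "strong_density comb foc \<Gamma> \<longleftrightarrow>
     (\<forall>\<phi> x. is_lub (ia_le comb)
        {\<psi>\<in>\<Gamma>. \<psi> = foc \<psi> x \<and> way_below (ia_le comb) \<psi> \<phi>} (foc \<phi> x))"

definition compactness :: "('a \<Rightarrow> 'a \<Rightarrow> 'a) \<Rightarrow> 'a set \<Rightarrow> bool" where
  "compactness comb \<Gamma> \<longleftrightarrow>
     (\<forall>X \<phi> s. X \<subseteq> \<Gamma> \<and> directed (ia_le comb) X \<and> \<phi> \<in> \<Gamma> \<and>
        is_lub (ia_le comb) X s \<and> ia_le comb \<phi> s \<longrightarrow> (\<exists>\<psi>\<in>X. ia_le comb \<phi> \<psi>))"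

definition continuous_IA :: "('a \<Rightarrow> 'a \<Rightarrow> 'a) \<Rightarrow> 'a \<Rightarrow> bool" where
  "continuous_IA comb e \<longleftrightarrow>
     (\<exists>\<Gamma>. admissible_gen comb e \<Gamma> \<and> convergency comb \<Gamma> \<and> density comb \<Gamma>)"

definition s_continuous_IA :: "('a \<Rightarrow> 'a \<Rightarrow> 'a) \<Rightarrow> 'a \<Rightarrow> ('a \<Rightarrow> 'd \<Rightarrow> 'a) \<Rightarrow> bool" where
  "s_continuous_IA comb e foc \<longleftrightarrow>
     (\<exists>\<Gamma>. admissible_gen comb e \<Gamma> \<and> convergency comb \<Gamma> \<and> strong_density comb foc \<Gamma>)"

definition compact_IA :: "('a \<Rightarrow> 'a \<Rightarrow> 'a) \<Rightarrow> 'a \<Rightarrow> bool" where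
  "compact_IA comb e \<longleftrightarrow>
     (\<exists>\<Gamma>. admissible_gen comb e \<Gamma> \<and> convergency comb \<Gamma> \<and> density comb \<Gamma>
          \<and> compactness comb \<Gamma>)"

definition s_compact_IA :: "('a \<Rightarrow> 'a \<Rightarrow> 'a) \<Rightarrow> 'a \<Rightarrow> ('a \<Rightarrow> 'd \<Rightarrow> 'a) \<Rightarrow> bool" where
  "s_compact_IA comb e foc \<longleftrightarrow>
     (\<exists>\<Gamma>. admissible_gen comb e \<Gamma> \<and> convergency comb \<Gamma> \<and> strong_density comb foc \<Gamma>
          \<and> compactness comb \<Gamma>)"

end

theory Submission
  imports Defs
begin

text \<open>The information order is a partial order in which combination is the binary join
  and e the least element. Convergency and density of a generating set \<Gamma> already force
  completeness: the join of an arbitrary X is the supremum of the directed set of elements of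
  \<Gamma> lying below every upper bound of X. Density passes from \<Gamma> to every larger set, and
  under compactness every element of \<Gamma> is compact. Hence a suitable \<Gamma> exists iff the
  canonical one does the job: all of \<Phi> in the continuous cases, the compact elements in the
  compact cases, and for these the defining conditions are literally the lattice-theoretic
  ones. Strong density implies density because focusing on the top of D is the identity.\<close>

definition compact_elements :: "('a \<Rightarrow> 'a \<Rightarrow> bool) \<Rightarrow> 'a set" where
  "compact_elements le = {b. way_below le b b}"

lemma is_lub_singleton: "partial_ord le \<Longrightarrow> is_lub le {b} b"
  unfolding is_lub_def partial_ord_def by blast

lemma directed_singleton: "partial_ord le \<Longrightarrow> directed le {b}"
  unfolding directed_def partial_ord_def by blast

lemma way_below_imp_le:
  assumes "partial_ord le" and "way_below le a b"
  shows "le a b"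
proof -
  have "le b b" using assms(1) unfolding partial_ord_def by simp
  then have "\<exists>c\<in>{b}. le a c"
    using assms way_below_def directed_singleton is_lub_singleton by metis
  then show ?thesis by simp
qed

lemma way_below_le_trans:
  "partial_ord le \<Longrightarrow> way_below le a b \<Longrightarrow> le b c \<Longrightarrow> way_below le a c"
  unfolding way_below_def partial_ord_def by meson

lemma is_lub_superset:
  "is_lub le A s \<Longrightarrow> A \<subseteq> B \<Longrightarrow> (\<And>b. b \<in> B \<Longrightarrow> le b s) \<Longrightarrow> is_lub le B s"
  unfolding is_lub_def by blast

lemma compact_elements_way_below_iff:
  "partial_ord le \<Longrightarrow> b \<in> compact_elements le \<Longrightarrow> way_below le b a \<longleftrightarrow> le b a"
  unfolding compact_elements_def
  by (blast intro: way_below_imp_le way_below_le_trans)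

locale information_algebra =
  fixes comb :: "'a \<Rightarrow> 'a \<Rightarrow> 'a" and e :: 'a
    and foc :: "'a \<Rightarrow> 'd::bounded_lattice_top \<Rightarrow> 'a"
  assumes info_algebra: "info_algebra comb e foc"
begin

abbreviation info_le :: "'a \<Rightarrow> 'a \<Rightarrow> bool" (infix "\<preceq>" 50) where
  "a \<preceq> b \<equiv> ia_le comb a b"

abbreviation info_way_below :: "'a \<Rightarrow> 'a \<Rightarrow> bool" (infix "\<lless>" 50) where
  "a \<lless> b \<equiv> way_below (ia_le comb) a b"

lemma comb_assoc: "comb (comb a b) c = comb a (comb b c)"
  and comb_commute: "comb a b = comb b a"
  and comb_neutral: "comb a e = a"
  and foc_foc: "foc (foc \<psi> y) x = foc \<psi> (inf x y)"
  and foc_comb_foc: "foc (comb (foc \<phi> x) \<psi>) x = comb (foc \<phi> x) (foc \<psi> x)"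
  and foc_support: "\<exists>x. foc \<psi> x = \<psi>"
  and comb_foc_absorb: "comb \<psi> (foc \<psi> x) = \<psi>"
  using info_algebra unfolding info_algebra_def by blast+

lemma comb_idem: "comb a a = a"
proof -
  obtain x where "foc a x = a" using foc_support by blast
  then show ?thesis using comb_foc_absorb[of a x] by simp
qed

lemma info_le_trans: "a \<preceq> b \<Longrightarrow> b \<preceq> c \<Longrightarrow> a \<preceq> c"
  unfolding ia_le_def by (metis comb_assoc)

lemma partial_ord_info_le: "partial_ord (ia_le comb)"
  unfolding partial_ord_def ia_le_def by (metis comb_assoc comb_commute comb_idem)

lemma comb_upper1: "a \<preceq> comb a b"
  unfolding ia_le_def by (metis comb_assoc comb_idem)

lemma comb_upper2: "b \<preceq> comb a b"
  using comb_upper1 comb_commute by metis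

lemma comb_least: "a \<preceq> c \<Longrightarrow> b \<preceq> c \<Longrightarrow> comb a b \<preceq> c"
  unfolding ia_le_def by (metis comb_assoc)

lemma neutral_least: "e \<preceq> a"
  unfolding ia_le_def by (metis comb_commute comb_neutral)

lemma directed_if_comb_closed:
  "e \<in> S \<Longrightarrow> (\<And>a b. a \<in> S \<Longrightarrow> b \<in> S \<Longrightarrow> comb a b \<in> S) \<Longrightarrow> directed (ia_le comb) S"
  unfolding directed_def using comb_upper1 comb_upper2 by blast

lemma comb_way_below:
  assumes "a \<lless> c" and "b \<lless> c"
  shows "comb a b \<lless> c"
  unfolding way_below_def
proof (intro allI impI)
  fix X s assume X: "directed (ia_le comb) X \<and> is_lub (ia_le comb) X s \<and> c \<preceq> s"
  then obtain x1 x2 where "x1 \<in> X" "a \<preceq> x1" "x2 \<in> X" "b \<preceq> x2"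
    using assms unfolding way_below_def by meson
  with X obtain x3 where "x3 \<in> X" "x1 \<preceq> x3" "x2 \<preceq> x3"
    unfolding directed_def by blast
  then show "\<exists>x\<in>X. comb a b \<preceq> x"
    using \<open>a \<preceq> x1\<close> \<open>b \<preceq> x2\<close> comb_least info_le_trans by blast
qed

lemma neutral_way_below: "e \<lless> a"
  unfolding way_below_def directed_def using neutral_least by blast

lemma admissible_gen_UNIV: "admissible_gen comb e UNIV"
  unfolding admissible_gen_def by simp

lemma admissible_gen_compact_elements: "admissible_gen comb e (compact_elements (ia_le comb))"
proof -
  have "comb a b \<lless> comb a b" if "a \<lless> a" "b \<lless> b" for a b
    using that comb_upper1 comb_upper2
    by (blast intro: comb_way_below way_below_le_trans[OF partial_ord_info_le])
  then show ?thesis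
    unfolding admissible_gen_def compact_elements_def using neutral_way_below by blast
qed

lemma foc_le: "foc \<psi> x \<preceq> \<psi>"
  unfolding ia_le_def by (metis comb_commute comb_foc_absorb)

lemma foc_mono:
  assumes "\<psi> \<preceq> \<phi>"
  shows "foc \<psi> x \<preceq> foc \<phi> x"
proof -
  have "comb (foc \<psi> x) \<phi> = \<phi>"
    using foc_le assms info_le_trans unfolding ia_le_def by blast
  then show ?thesis
    using foc_comb_foc[of \<psi> x \<phi>] unfolding ia_le_def by simp
qed

lemma foc_top: "foc \<psi> top = \<psi>"
proof -
  obtain x where "foc \<psi> x = \<psi>" using foc_support by blast
  then show ?thesis using foc_foc[of \<psi> x top] by simp
qed

lemma density_if_strong_density:
  assumes "strong_density comb foc \<Gamma>"
  shows "density comb \<Gamma>"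
  using assms[unfolded strong_density_def, rule_format, where x=top]
  unfolding density_def by (simp add: foc_top)

lemma density_mono:
  assumes "density comb \<Gamma>" and "\<Gamma> \<subseteq> \<Gamma>'"
  shows "density comb \<Gamma>'"
  unfolding density_def
proof
  fix \<phi>
  show "is_lub (ia_le comb) {\<psi> \<in> \<Gamma>'. \<psi> \<lless> \<phi>} \<phi>"
  proof (rule is_lub_superset)
    show "is_lub (ia_le comb) {\<psi> \<in> \<Gamma>. \<psi> \<lless> \<phi>} \<phi>"
      using assms(1) unfolding density_def by blast
    show "{\<psi> \<in> \<Gamma>. \<psi> \<lless> \<phi>} \<subseteq> {\<psi> \<in> \<Gamma>'. \<psi> \<lless> \<phi>}"
      using assms(2) by blast
  qed (simp add: way_below_imp_le[OF partial_ord_info_le])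
qed

lemma strong_density_mono:
  assumes "strong_density comb foc \<Gamma>" and "\<Gamma> \<subseteq> \<Gamma>'"
  shows "strong_density comb foc \<Gamma>'"
  unfolding strong_density_def
proof (intro allI)
  fix \<phi> x
  show "is_lub (ia_le comb) {\<psi> \<in> \<Gamma>'. \<psi> = foc \<psi> x \<and> \<psi> \<lless> \<phi>} (foc \<phi> x)"
  proof (rule is_lub_superset)
    show "is_lub (ia_le comb) {\<psi> \<in> \<Gamma>. \<psi> = foc \<psi> x \<and> \<psi> \<lless> \<phi>} (foc \<phi> x)"
      using assms(1) unfolding strong_density_def by blast
    fix \<psi> assume "\<psi> \<in> {\<psi> \<in> \<Gamma>'. \<psi> = foc \<psi> x \<and> \<psi> \<lless> \<phi>}"
    then show "\<psi> \<preceq> foc \<phi> x"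
      using foc_mono way_below_imp_le[OF partial_ord_info_le] by (metis (mono_tags) mem_Collect_eq)
  qed (use assms(2) in blast)
qed

lemma le_if_density:
  assumes "density comb \<Gamma>" and "\<And>\<psi>. \<psi> \<in> \<Gamma> \<Longrightarrow> \<psi> \<lless> x \<Longrightarrow> \<psi> \<preceq> u"
  shows "x \<preceq> u"
  using assms unfolding density_def is_lub_def by blast

lemma complete_lat_if_density:
  assumes adm: "admissible_gen comb e \<Gamma>" and conv: "convergency comb \<Gamma>"
    and dens: "density comb \<Gamma>"
  shows "complete_lat (ia_le comb)"
  unfolding complete_lat_def
proof (intro conjI allI partial_ord_info_le)
  fix X
  define F where "F = {\<psi>\<in>\<Gamma>. \<forall>u. (\<forall>x\<in>X. x \<preceq> u) \<longrightarrow> \<psi> \<preceq> u}"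
  have "directed (ia_le comb) F"
  proof (rule directed_if_comb_closed)
    show "e \<in> F"
      using adm neutral_least unfolding F_def admissible_gen_def by blast
    show "comb a b \<in> F" if "a \<in> F" "b \<in> F" for a b
      using that adm comb_least unfolding F_def admissible_gen_def by blast
  qed
  moreover have "F \<subseteq> \<Gamma>" unfolding F_def by blast
  ultimately obtain s where s: "is_lub (ia_le comb) F s"
    using conv unfolding convergency_def has_lub_def by blast
  have "x \<preceq> s" if "x \<in> X" for x
  proof (rule le_if_density[OF dens])
    fix \<psi> assume "\<psi> \<in> \<Gamma>" "\<psi> \<lless> x"
    then have "\<psi> \<in> F"
      using that way_below_imp_le[OF partial_ord_info_le] info_le_trans unfolding F_def by blast
    then show "\<psi> \<preceq> s" using s unfolding is_lub_def by blast
  qed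
  moreover have "s \<preceq> u" if "\<forall>x\<in>X. x \<preceq> u" for u
  proof -
    have "\<psi> \<preceq> u" if "\<psi> \<in> F" for \<psi>
      using that \<open>\<forall>x\<in>X. x \<preceq> u\<close> unfolding F_def by blast
    then show ?thesis using s unfolding is_lub_def by blast
  qed
  ultimately show "has_lub (ia_le comb) X"
    unfolding has_lub_def is_lub_def by blast
qed

lemma compact_elements_if_compactness:
  assumes adm: "admissible_gen comb e \<Gamma>" and conv: "convergency comb \<Gamma>"
    and dens: "density comb \<Gamma>" and cpt: "compactness comb \<Gamma>"
  shows "\<Gamma> \<subseteq> compact_elements (ia_le comb)"
proof
  fix \<phi> assume "\<phi> \<in> \<Gamma>"
  have "\<exists>x\<in>X. \<phi> \<preceq> x"
    if X: "directed (ia_le comb) X" "is_lub (ia_le comb) X s" "\<phi> \<preceq> s" for X s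
  proof -
    define Y where "Y = {\<psi>\<in>\<Gamma>. \<exists>x\<in>X. \<psi> \<preceq> x}"
    have "directed (ia_le comb) Y"
    proof (rule directed_if_comb_closed)
      show "e \<in> Y"
        using X(1) adm neutral_least unfolding Y_def directed_def admissible_gen_def by blast
      fix a b assume "a \<in> Y" "b \<in> Y"
      then obtain xa xb where "a \<in> \<Gamma>" "b \<in> \<Gamma>" "xa \<in> X" "xb \<in> X" "a \<preceq> xa" "b \<preceq> xb"
        unfolding Y_def by blast
      moreover obtain xc where "xc \<in> X" "xa \<preceq> xc" "xb \<preceq> xc"
        using X(1) \<open>xa \<in> X\<close> \<open>xb \<in> X\<close> unfolding directed_def by blast
      ultimately show "comb a b \<in> Y"
        using adm comb_least info_le_trans unfolding Y_def admissible_gen_def by blast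
    qed
    moreover have "Y \<subseteq> \<Gamma>" unfolding Y_def by blast
    ultimately obtain t where t: "is_lub (ia_le comb) Y t"
      using conv unfolding convergency_def has_lub_def by blast
    have "x \<preceq> t" if "x \<in> X" for x
    proof (rule le_if_density[OF dens])
      fix \<psi> assume "\<psi> \<in> \<Gamma>" "\<psi> \<lless> x"
      then have "\<psi> \<in> Y"
        using that way_below_imp_le[OF partial_ord_info_le] unfolding Y_def by blast
      then show "\<psi> \<preceq> t" using t unfolding is_lub_def by blast
    qed
    then have "s \<preceq> t" using X(2) unfolding is_lub_def by blast
    then have "\<phi> \<preceq> t" using X(3) info_le_trans by blast
    then obtain \<psi> where "\<psi> \<in> Y" "\<phi> \<preceq> \<psi>"
      using cpt \<open>directed (ia_le comb) Y\<close> \<open>Y \<subseteq> \<Gamma>\<close> t \<open>\<phi> \<in> \<Gamma>\<close>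
      unfolding compactness_def by blast
    then show ?thesis unfolding Y_def using info_le_trans by blast
  qed
  then show "\<phi> \<in> compact_elements (ia_le comb)"
    unfolding compact_elements_def way_below_def by blast
qed

lemma compactness_compact_elements: "compactness comb (compact_elements (ia_le comb))"
  unfolding compactness_def compact_elements_def way_below_def by blast

lemma convergency_if_complete_lat: "complete_lat (ia_le comb) \<Longrightarrow> convergency comb \<Gamma>"
  unfolding complete_lat_def convergency_def by blast

lemma generator_exists_iff:
  assumes adm: "admissible_gen comb e \<Gamma>\<^sub>0"
    and canonical: "\<And>\<Gamma>. admissible_gen comb e \<Gamma> \<Longrightarrow> convergency comb \<Gamma> \<Longrightarrow> P \<Gamma> \<Longrightarrow>
           density comb \<Gamma> \<and> P \<Gamma>\<^sub>0"
  shows "(\<exists>\<Gamma>. admissible_gen comb e \<Gamma> \<and> convergency comb \<Gamma> \<and> P \<Gamma>) \<longleftrightarrow>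
           complete_lat (ia_le comb) \<and> P \<Gamma>\<^sub>0"
proof
  assume "\<exists>\<Gamma>. admissible_gen comb e \<Gamma> \<and> convergency comb \<Gamma> \<and> P \<Gamma>"
  then obtain \<Gamma> where "admissible_gen comb e \<Gamma>" "convergency comb \<Gamma>" "P \<Gamma>" by blast
  with canonical complete_lat_if_density show "complete_lat (ia_le comb) \<and> P \<Gamma>\<^sub>0" by blast
next
  assume "complete_lat (ia_le comb) \<and> P \<Gamma>\<^sub>0"
  with adm convergency_if_complete_lat
  show "\<exists>\<Gamma>. admissible_gen comb e \<Gamma> \<and> convergency comb \<Gamma> \<and> P \<Gamma>" by blast
qed

lemma continuous_IA_iff:
  "continuous_IA comb e \<longleftrightarrow> complete_lat (ia_le comb) \<and> density comb UNIV"
  unfolding continuous_IA_def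
proof (rule generator_exists_iff[OF admissible_gen_UNIV])
  show "density comb \<Gamma> \<and> density comb UNIV" if "density comb \<Gamma>" for \<Gamma>
    using that density_mono by blast
qed

lemma compact_IA_iff:
  "compact_IA comb e \<longleftrightarrow> complete_lat (ia_le comb) \<and> density comb (compact_elements (ia_le comb))"
proof -
  have "compact_IA comb e \<longleftrightarrow> complete_lat (ia_le comb) \<and>
      density comb (compact_elements (ia_le comb)) \<and>
      compactness comb (compact_elements (ia_le comb))"
    unfolding compact_IA_def
  proof (rule generator_exists_iff[OF admissible_gen_compact_elements])
    fix \<Gamma>
    assume "admissible_gen comb e \<Gamma>" "convergency comb \<Gamma>"
      and "density comb \<Gamma> \<and> compactness comb \<Gamma>"
    with compact_elements_if_compactness density_mono compactness_compact_elements
    show "density comb \<Gamma> \<and> density comb (compact_elements (ia_le comb)) \<and>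
        compactness comb (compact_elements (ia_le comb))" by blast
  qed
  with compactness_compact_elements show ?thesis by blast
qed

lemma s_continuous_IA_iff:
  "s_continuous_IA comb e foc \<longleftrightarrow> complete_lat (ia_le comb) \<and> strong_density comb foc UNIV"
  unfolding s_continuous_IA_def
proof (rule generator_exists_iff[OF admissible_gen_UNIV])
  show "density comb \<Gamma> \<and> strong_density comb foc UNIV" if "strong_density comb foc \<Gamma>" for \<Gamma>
    using that density_if_strong_density strong_density_mono by blast
qed

lemma s_compact_IA_iff:
  "s_compact_IA comb e foc \<longleftrightarrow>
     complete_lat (ia_le comb) \<and> strong_density comb foc (compact_elements (ia_le comb))"
proof -
  have "s_compact_IA comb e foc \<longleftrightarrow> complete_lat (ia_le comb) \<and>
      strong_density comb foc (compact_elements (ia_le comb)) \<and>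
      compactness comb (compact_elements (ia_le comb))"
    unfolding s_compact_IA_def
  proof (rule generator_exists_iff[OF admissible_gen_compact_elements])
    fix \<Gamma>
    assume "admissible_gen comb e \<Gamma>" "convergency comb \<Gamma>"
      and "strong_density comb foc \<Gamma> \<and> compactness comb \<Gamma>"
    with compact_elements_if_compactness density_if_strong_density strong_density_mono
      compactness_compact_elements
    show "density comb \<Gamma> \<and> strong_density comb foc (compact_elements (ia_le comb)) \<and>
        compactness comb (compact_elements (ia_le comb))" by blast
  qed
  with compactness_compact_elements show ?thesis by blast
qed

lemma continuous_lat_iff_density_UNIV:
  "continuous_lat (ia_le comb) \<longleftrightarrow> complete_lat (ia_le comb) \<and> density comb UNIV"
  unfolding continuous_lat_def density_def by simp

lemma algebraic_lat_iff_density_compact_elements: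
  "algebraic_lat (ia_le comb) \<longleftrightarrow>
     complete_lat (ia_le comb) \<and> density comb (compact_elements (ia_le comb))"
proof -
  have "{\<psi> \<in> compact_elements (ia_le comb). \<psi> \<lless> a} = {b. b \<lless> b \<and> b \<preceq> a}" for a
    using compact_elements_way_below_iff[OF partial_ord_info_le]
    unfolding compact_elements_def by blast
  then show ?thesis unfolding algebraic_lat_def density_def by simp
qed

lemma strong_density_compact_elements_iff:
  "strong_density comb foc (compact_elements (ia_le comb)) \<longleftrightarrow>
     (\<forall>\<phi> x. is_lub (ia_le comb) {\<psi>. \<psi> \<lless> \<psi> \<and> \<psi> = foc \<psi> x \<and> \<psi> \<preceq> \<phi>} (foc \<phi> x))"
proof -
  have "{\<psi> \<in> compact_elements (ia_le comb). \<psi> = foc \<psi> x \<and> \<psi> \<lless> \<phi>} =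
      {\<psi>. \<psi> \<lless> \<psi> \<and> \<psi> = foc \<psi> x \<and> \<psi> \<preceq> \<phi>}" for \<phi> x
    using compact_elements_way_below_iff[OF partial_ord_info_le]
    unfolding compact_elements_def by blast
  then show ?thesis unfolding strong_density_def by simp
qed

end

theorem theorem3p8:
  fixes comb :: "'a \<Rightarrow> 'a \<Rightarrow> 'a" and e :: 'a
    and foc :: "'a \<Rightarrow> 'd::bounded_lattice_top \<Rightarrow> 'a"
  assumes "info_algebra comb e foc"
  shows "(continuous_IA comb e \<longleftrightarrow> continuous_lat (ia_le comb))
       \<and> (compact_IA comb e \<longleftrightarrow> algebraic_lat (ia_le comb))
       \<and> (s_continuous_IA comb e foc \<longleftrightarrow>
            complete_lat (ia_le comb) \<and>
            (\<forall>\<phi> x. is_lub (ia_le comb)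
               {\<psi>. \<psi> = foc \<psi> x \<and> way_below (ia_le comb) \<psi> \<phi>} (foc \<phi> x)))
       \<and> (s_compact_IA comb e foc \<longleftrightarrow>
            complete_lat (ia_le comb) \<and>
            (\<forall>\<phi> x. is_lub (ia_le comb)
               {\<psi>. way_below (ia_le comb) \<psi> \<psi> \<and> \<psi> = foc \<psi> x \<and> ia_le comb \<psi> \<phi>} (foc \<phi> x)))"
proof -
  interpret information_algebra comb e foc by (rule information_algebra.intro[OF assms])
  show ?thesis
    using continuous_IA_iff continuous_lat_iff_density_UNIV
      compact_IA_iff algebraic_lat_iff_density_compact_elements
      s_continuous_IA_iff s_compact_IA_iff strong_density_compact_elements_iff
    unfolding strong_density_def by simp
qed

end
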